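(* Let $(\mathbf F,\prec)$ be an IS-family over a finite set $V$. For every integer $x\ge0$, $M(x)\le 2^x|sm(\mathbf F)|$.
   Context: Let $V$ be a finite set, $n=|V|$, $\mathbf F$ a family of subsets of $V$ and $\prec$ a strict partial order on $\mathbf F$; $S\preceq S'$ means $S\prec S'$ or $S=S'$. For $S\in\mathbf F$ and $v\in V$, $S$ covers $v$ if there is $S'\in\mathbf F$ with $S'\prec S$ and $v\in S'\setminus S$. $Pred(S)$ is the set of $S'\in\mathbf F$ with $S'\prec S$ such that there is no $S''\in\mathbf F$ with $S'\prec S''\prec S$. The visible set $Vis(S)$ is the set of $v\in V$ such that $v\in S'$ for some $S'\in Pred(S)$ and $v$ is not covered by any element of $Pred(S)$. For $S\in\mathbf F$ and $v\in S$, a witness of $v$ w.r.t. $S$ is a $\prec$-minimal element $S'\in\mathbf F$ with $S\prec S'$ and $v\in S\setminus S'$. $(\mathbf F,\prec)$ is an IS-family if: (SE) there is a unique element $sm(\mathbf F)\in\mathbf F$ with $sm(\mathbf F)\prec S$ for every other $S\in\mathbf F$; (SM) $S_1\prec S_2$ implies $|S_1|<|S_2|$; (SW) for every $S\in\mathbf F$ and $v\in S$ there is at most one witness of $v$ w.r.t. $S$; (TE) if $S_1\prec S_2\prec S_3$ are in $\mathbf F$ and $v\in S_1\setminus S_2$ then $v\in S_1\setminus S_3$; (LVS) for every $S\in\mathbf F$ and $S'\in Pred(S)$, $|S'|\le |Vis(S)|$; (DVS) for every $S\in\mathbf F$ with $S\ne sm(\mathbf F)$, $Vis(S)$ is not a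 subset of $S$; (EC) $sm(\mathbf F)$ can be computed in $O(n^3)$ time, for given $S\in\mathbf F$ and $v\in S$ the witness of $v$ w.r.t. $S$ can be computed (or its nonexistence reported) in $O(n^3)$ time, and $S_1\prec S_2$ can be tested in $O(|S_1|)$ time. Notation: $hat(S)=S\setminus\bigcup_{S'\prec S}S'$; $ex(S)=|S|-|sm(\mathbf F)|$; for $x\ge0$, $\mathbf E_x=\{S\in\mathbf F: ex(S)\le x\}$; for $S\in\mathbf E_x$, $hat_x(S)$ is the set of $v\in hat(S)$ such that there is no $S'\in\mathbf E_x$ with $S\prec S'$ and $v\in S\setminus S'$; $M(x)=\sum_{S\in\mathbf E_x}2^{x-ex(S)}|hat_x(S)|$. *)

theory Defs
  imports Main
begin

definition strict_po_on :: "'a set set \<Rightarrow> ('a set \<Rightarrow> 'a set \<Rightarrow> bool) \<Rightarrow> bool" where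
  "strict_po_on F lt \<longleftrightarrow>
     (\<forall>S\<in>F. \<not> lt S S) \<and>
     (\<forall>S1\<in>F. \<forall>S2\<in>F. \<forall>S3\<in>F. lt S1 S2 \<longrightarrow> lt S2 S3 \<longrightarrow> lt S1 S3)"

definition covers :: "'a set set \<Rightarrow> ('a set \<Rightarrow> 'a set \<Rightarrow> bool) \<Rightarrow> 'a set \<Rightarrow> 'a \<Rightarrow> bool" where
  "covers F lt S v \<longleftrightarrow> (\<exists>S'\<in>F. lt S' S \<and> v \<in> S' - S)"

definition Pred :: "'a set set \<Rightarrow> ('a set \<Rightarrow> 'a set \<Rightarrow> bool) \<Rightarrow> 'a set \<Rightarrow> 'a set set" where
  "Pred F lt S = {S'\<in>F. lt S' S \<and> \<not> (\<exists>S''\<in>F. lt S' S'' \<and> lt S'' S)}"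

definition Vis :: "'a set \<Rightarrow> 'a set set \<Rightarrow> ('a set \<Rightarrow> 'a set \<Rightarrow> bool) \<Rightarrow> 'a set \<Rightarrow> 'a set" where
  "Vis V F lt S = {v\<in>V. (\<exists>S'\<in>Pred F lt S. v \<in> S') \<and> \<not> (\<exists>S'\<in>Pred F lt S. covers F lt S' v)}"

definition is_witness :: "'a set set \<Rightarrow> ('a set \<Rightarrow> 'a set \<Rightarrow> bool) \<Rightarrow> 'a set \<Rightarrow> 'a \<Rightarrow> 'a set \<Rightarrow> bool" where
  "is_witness F lt S v S' \<longleftrightarrow>
     S' \<in> F \<and> lt S S' \<and> v \<in> S - S' \<and>
     \<not> (\<exists>T\<in>F. lt S T \<and> v \<in> S - T \<and> lt T S')"

definition sm :: "'a set set \<Rightarrow> ('a set \<Rightarrow> 'a set \<Rightarrow> bool) \<Rightarrow> 'a set" where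
  "sm F lt = (THE s. s \<in> F \<and> (\<forall>S\<in>F. S \<noteq> s \<longrightarrow> lt s S))"

definition IS_family :: "'a set \<Rightarrow> 'a set set \<Rightarrow> ('a set \<Rightarrow> 'a set \<Rightarrow> bool) \<Rightarrow> bool" where
  "IS_family V F lt \<longleftrightarrow>
     finite V \<and> (\<forall>S\<in>F. S \<subseteq> V) \<and> strict_po_on F lt \<and>
     \<comment> \<open>(SE)\<close>
     (\<exists>!s. s \<in> F \<and> (\<forall>S\<in>F. S \<noteq> s \<longrightarrow> lt s S)) \<and>
     \<comment> \<open>(SM)\<close>
     (\<forall>S1\<in>F. \<forall>S2\<in>F. lt S1 S2 \<longrightarrow> card S1 < card S2) \<and>
     \<comment> \<open>(SW)\<close>
     (\<forall>S\<in>F. \<forall>v\<in>S. \<forall>W1 W2. is_witness F lt S v W1 \<longrightarrow> is_witness F lt S v W2 \<longrightarrow> W1 = W2) \<and>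
     \<comment> \<open>(TE)\<close>
     (\<forall>S1\<in>F. \<forall>S2\<in>F. \<forall>S3\<in>F. \<forall>v. lt S1 S2 \<longrightarrow> lt S2 S3 \<longrightarrow> v \<in> S1 - S2 \<longrightarrow> v \<in> S1 - S3) \<and>
     \<comment> \<open>(LVS)\<close>
     (\<forall>S\<in>F. \<forall>S'\<in>Pred F lt S. card S' \<le> card (Vis V F lt S)) \<and>
     \<comment> \<open>(DVS)\<close>
     (\<forall>S\<in>F. S \<noteq> sm F lt \<longrightarrow> \<not> Vis V F lt S \<subseteq> S)"

definition hat :: "'a set set \<Rightarrow> ('a set \<Rightarrow> 'a set \<Rightarrow> bool) \<Rightarrow> 'a set \<Rightarrow> 'a set" where
  "hat F lt S = S - \<Union>{S'\<in>F. lt S' S}"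

definition ex :: "'a set set \<Rightarrow> ('a set \<Rightarrow> 'a set \<Rightarrow> bool) \<Rightarrow> 'a set \<Rightarrow> nat" where
  "ex F lt S = card S - card (sm F lt)"

definition E :: "'a set set \<Rightarrow> ('a set \<Rightarrow> 'a set \<Rightarrow> bool) \<Rightarrow> nat \<Rightarrow> 'a set set" where
  "E F lt x = {S\<in>F. ex F lt S \<le> x}"

definition hat_x :: "'a set set \<Rightarrow> ('a set \<Rightarrow> 'a set \<Rightarrow> bool) \<Rightarrow> nat \<Rightarrow> 'a set \<Rightarrow> 'a set" where
  "hat_x F lt x S = {v\<in>hat F lt S. \<not> (\<exists>S'\<in>E F lt x. lt S S' \<and> v \<in> S - S')}"

definition M :: "'a set set \<Rightarrow> ('a set \<Rightarrow> 'a set \<Rightarrow> bool) \<Rightarrow> nat \<Rightarrow> nat" where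
  "M F lt x = (\<Sum>S\<in>E F lt x. 2 ^ (x - ex F lt S) * card (hat_x F lt x S))"

end

theory Submission
  imports Defs
begin

text \<open>Since \<open>M 0 = card (sm F lt)\<close>, it suffices to show \<open>M (x + 1) \<le> 2 * M x\<close>.
  Passing from \<open>E x\<close> to \<open>E (x + 1)\<close> doubles every weight and adds the new sets \<open>T\<close> with
  \<open>ex T = x + 1\<close>; on the other hand an element \<open>v \<in> hat S\<close> drops out of \<open>hat_x\<close> exactly when
  its witness with respect to \<open>S\<close> is such a new \<open>T\<close>. By (SW) these witness pairs \<open>(S, v)\<close> are
  charged to a single \<open>T\<close>, so it remains to see that the pairs charged to \<open>T\<close> have total weight
  \<open>2 ^ (x + 1 - ex S)\<close> at least \<open>card (hat T)\<close>. Every visible element outside \<open>T\<close> yields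
  such a pair (by (TE), a nearer witness would be covered by a predecessor of \<open>T\<close>), and
  (LVS) together with the heavy pair coming from (DVS) makes up for the rest of \<open>hat T\<close>.\<close>

lemma card_plus_le_sum_weights:
  fixes w :: "'b \<Rightarrow> nat"
  assumes "finite R" "p \<in> R" "k < w p" "\<And>q. q \<in> R \<Longrightarrow> 1 \<le> w q"
  shows "k + card R \<le> sum w R"
proof -
  have "card (R - {p}) = (\<Sum>q\<in>R - {p}. 1)" by simp
  also have "\<dots> \<le> sum w (R - {p})" using assms(4) by (intro sum_mono) auto
  finally have "card (R - {p}) \<le> sum w (R - {p})" .
  moreover have "card R = Suc (card (R - {p}))"
    using assms(1,2) by (rule card_Suc_Diff1[symmetric])
  moreover have "sum w R = w p + sum w (R - {p})"
    using assms(1,2) by (rule sum.remove)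
  ultimately show ?thesis using assms(3) by linarith
qed

context
  fixes V :: "'a set" and F :: "'a set set" and lt :: "'a set \<Rightarrow> 'a set \<Rightarrow> bool"
  assumes IS: "IS_family V F lt"
begin

lemma IS_familyD:
  "finite V" "\<forall>S\<in>F. S \<subseteq> V" "strict_po_on F lt"
  "\<exists>!s. s \<in> F \<and> (\<forall>S\<in>F. S \<noteq> s \<longrightarrow> lt s S)"
  "\<forall>S1\<in>F. \<forall>S2\<in>F. lt S1 S2 \<longrightarrow> card S1 < card S2"
  "\<forall>S\<in>F. \<forall>v\<in>S. \<forall>W1 W2. is_witness F lt S v W1 \<longrightarrow> is_witness F lt S v W2 \<longrightarrow> W1 = W2"
  "\<forall>S1\<in>F. \<forall>S2\<in>F. \<forall>S3\<in>F. \<forall>v. lt S1 S2 \<longrightarrow> lt S2 S3 \<longrightarrow> v \<in> S1 - S2 \<longrightarrow> v \<in> S1 - S3"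
  "\<forall>S\<in>F. \<forall>S'\<in>Pred F lt S. card S' \<le> card (Vis V F lt S)"
  "\<forall>S\<in>F. S \<noteq> sm F lt \<longrightarrow> \<not> Vis V F lt S \<subseteq> S"
  using IS unfolding IS_family_def by simp_all

lemma
  shows finite_V: "finite V"
    and subset_V: "S \<in> F \<Longrightarrow> S \<subseteq> V"
    and lt_irrefl: "S \<in> F \<Longrightarrow> \<not> lt S S"
    and lt_trans: "\<lbrakk>S1 \<in> F; S2 \<in> F; S3 \<in> F; lt S1 S2; lt S2 S3\<rbrakk> \<Longrightarrow> lt S1 S3"
    and card_lt: "\<lbrakk>S1 \<in> F; S2 \<in> F; lt S1 S2\<rbrakk> \<Longrightarrow> card S1 < card S2"
    and witness_unique:
      "\<lbrakk>S \<in> F; v \<in> S; is_witness F lt S v W1; is_witness F lt S v W2\<rbrakk> \<Longrightarrow> W1 = W2"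
    and removed_stays_removed:
      "\<lbrakk>S1 \<in> F; S2 \<in> F; S3 \<in> F; lt S1 S2; lt S2 S3; v \<in> S1 - S2\<rbrakk> \<Longrightarrow> v \<notin> S3"
    and card_Pred_le_Vis: "\<lbrakk>S \<in> F; S' \<in> Pred F lt S\<rbrakk> \<Longrightarrow> card S' \<le> card (Vis V F lt S)"
    and Vis_not_subset: "\<lbrakk>S \<in> F; S \<noteq> sm F lt\<rbrakk> \<Longrightarrow> \<not> Vis V F lt S \<subseteq> S"
proof -
  show "finite V" using IS_familyD(1) .
  show "S \<in> F \<Longrightarrow> S \<subseteq> V" using IS_familyD(2) by blast
  show "S \<in> F \<Longrightarrow> \<not> lt S S"
    using IS_familyD(3) unfolding strict_po_on_def by blast
  show "\<lbrakk>S1 \<in> F; S2 \<in> F; S3 \<in> F; lt S1 S2; lt S2 S3\<rbrakk> \<Longrightarrow> lt S1 S3"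
    using IS_familyD(3) unfolding strict_po_on_def by blast
  show "\<lbrakk>S1 \<in> F; S2 \<in> F; lt S1 S2\<rbrakk> \<Longrightarrow> card S1 < card S2"
    using IS_familyD(5) by blast
  show "\<lbrakk>S \<in> F; v \<in> S; is_witness F lt S v W1; is_witness F lt S v W2\<rbrakk> \<Longrightarrow> W1 = W2"
    using IS_familyD(6) by blast
  show "\<lbrakk>S1 \<in> F; S2 \<in> F; S3 \<in> F; lt S1 S2; lt S2 S3; v \<in> S1 - S2\<rbrakk> \<Longrightarrow> v \<notin> S3"
    using IS_familyD(7) by blast
  show "\<lbrakk>S \<in> F; S' \<in> Pred F lt S\<rbrakk> \<Longrightarrow> card S' \<le> card (Vis V F lt S)"
    using IS_familyD(8) by blast
  show "\<lbrakk>S \<in> F; S \<noteq> sm F lt\<rbrakk> \<Longrightarrow> \<not> Vis V F lt S \<subseteq> S"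
    using IS_familyD(9) by blast
qed

lemma finite_F: "finite F"
  using finite_V subset_V by (meson PowI finite_Pow_iff finite_subset subsetI)

lemma finite_member: "S \<in> F \<Longrightarrow> finite S"
  using finite_V subset_V finite_subset by blast

lemma sm_in: "sm F lt \<in> F"
  and sm_lt: "\<lbrakk>S \<in> F; S \<noteq> sm F lt\<rbrakk> \<Longrightarrow> lt (sm F lt) S"
  using theI'[OF IS_familyD(4)] unfolding sm_def by blast+

lemma card_sm_le: "S \<in> F \<Longrightarrow> card (sm F lt) \<le> card S"
  using sm_lt card_lt[OF sm_in] by (cases "S = sm F lt") (auto intro: less_imp_le)

lemma E_0: "E F lt 0 = {sm F lt}"
proof -
  have "S = sm F lt" if "S \<in> F" "card S \<le> card (sm F lt)" for S
    using that sm_lt card_lt[OF sm_in that(1)] by fastforce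
  then show ?thesis unfolding E_def ex_def using sm_in by auto
qed

lemma hat_sm: "hat F lt (sm F lt) = sm F lt"
proof -
  have "\<not> lt S (sm F lt)" if "S \<in> F" for S
    using that sm_lt lt_trans[OF sm_in that sm_in] lt_irrefl[OF sm_in] lt_irrefl[OF that] by blast
  then show ?thesis unfolding hat_def by auto
qed

lemma M_0: "M F lt 0 = card (sm F lt)"
proof -
  have "hat_x F lt 0 (sm F lt) = sm F lt"
    unfolding hat_x_def hat_sm E_0 using lt_irrefl[OF sm_in] by auto
  then show ?thesis unfolding M_def E_0 ex_def by simp
qed

lemma finite_hat: "S \<in> F \<Longrightarrow> finite (hat F lt S)"
  unfolding hat_def using finite_member by simp

lemma hat_x_subset_hat: "hat_x F lt x S \<subseteq> hat F lt S"
  unfolding hat_x_def by blast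

lemma hat_x_Suc_subset: "hat_x F lt (Suc x) S \<subseteq> hat_x F lt x S"
  unfolding hat_x_def E_def by auto

lemma finite_hat_x: "S \<in> F \<Longrightarrow> finite (hat_x F lt x S)"
  by (rule finite_subset[OF hat_x_subset_hat finite_hat])

lemma finite_E: "finite (E F lt x)"
  unfolding E_def using finite_F by simp

lemma ex_lt_minimal:
  assumes "A \<in> F" "P A"
  obtains B where "B \<in> F" "P B" "\<And>C. \<lbrakk>C \<in> F; P C\<rbrakk> \<Longrightarrow> \<not> lt C B"
proof -
  obtain B where "B \<in> F \<and> P B" and "\<forall>C. C \<in> F \<and> P C \<longrightarrow> card B \<le> card C"
    using ex_has_least_nat[of "\<lambda>B. B \<in> F \<and> P B" A card] assms by blast
  then show thesis using that card_lt by (meson leD)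
qed

lemma ex_lt_maximal:
  assumes "A \<in> F" "P A"
  obtains B where "B \<in> F" "P B" "\<And>C. \<lbrakk>C \<in> F; P C\<rbrakk> \<Longrightarrow> \<not> lt B C"
proof -
  have "\<forall>C. C \<in> F \<and> P C \<longrightarrow> card C < Suc (card V)"
    using subset_V finite_V by (simp add: card_mono le_imp_less_Suc)
  then obtain B where "B \<in> F \<and> P B" and "\<forall>C. C \<in> F \<and> P C \<longrightarrow> card C \<le> card B"
    using Lattices_Big.ex_has_greatest_nat[of "\<lambda>B. B \<in> F \<and> P B" A card] assms by blast
  then show thesis using that card_lt by (meson leD)
qed

lemma Pred_above:
  assumes "A \<in> F" "T \<in> F" "lt A T"
  obtains P where "P \<in> Pred F lt T" "P = A \<or> lt A P"
proof -
  obtain P where P: "P \<in> F" "(P = A \<or> lt A P) \<and> lt P T"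
    and max: "\<And>C. \<lbrakk>C \<in> F; (C = A \<or> lt A C) \<and> lt C T\<rbrakk> \<Longrightarrow> \<not> lt P C"
    using ex_lt_maximal[of A "\<lambda>P. (P = A \<or> lt A P) \<and> lt P T"] assms by blast
  have "\<not> (lt P C \<and> lt C T)" if "C \<in> F" for C
    using max[OF that] lt_trans[OF assms(1) P(1) that] P by blast
  then show thesis using that P unfolding Pred_def by blast
qed

lemma witness_below:
  assumes S: "S \<in> F" and S': "S' \<in> F" "lt S S'" "v \<in> S - S'"
  obtains W where "is_witness F lt S v W" "W = S' \<or> lt W S'"
proof -
  let ?P = "\<lambda>W. lt S W \<and> v \<in> S - W \<and> (W = S' \<or> lt W S')"
  obtain W where W: "W \<in> F" "?P W" and min: "\<And>C. \<lbrakk>C \<in> F; ?P C\<rbrakk> \<Longrightarrow> \<not> lt C W"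
    using ex_lt_minimal[of S' ?P] S' by blast
  have "?P C" if "C \<in> F" "lt S C" "v \<in> S - C" "lt C W" for C
    using that W lt_trans[OF that(1) W(1) S'(1)] by blast
  then have "is_witness F lt S v W"
    unfolding is_witness_def using W min by blast
  then show thesis using that W by blast
qed

lemma witness_of_visible:
  assumes T: "T \<in> F" and v: "v \<in> Vis V F lt T" "v \<notin> T"
    and S': "S' \<in> Pred F lt T" "v \<in> S'"
  obtains S where "S \<in> F" "S = S' \<or> lt S S'" "v \<in> hat F lt S" "is_witness F lt S v T"
proof -
  have S'F: "S' \<in> F" and "lt S' T" using S' unfolding Pred_def by auto
  let ?P = "\<lambda>S. (S = S' \<or> lt S S') \<and> v \<in> S"
  obtain S where S: "S \<in> F" "?P S" and min: "\<And>C. \<lbrakk>C \<in> F; ?P C\<rbrakk> \<Longrightarrow> \<not> lt C S"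
    using ex_lt_minimal[of S' ?P] S' S'F by blast
  have ST: "lt S T" using S \<open>lt S' T\<close> lt_trans[OF S(1) S'F T] by blast
  have "v \<notin> C" if "C \<in> F" "lt C S" for C
    using that min[OF that(1)] S lt_trans[OF that(1) S(1) S'F] by blast
  then have hat: "v \<in> hat F lt S" unfolding hat_def using S by blast
  have "False" if C: "C \<in> F" "lt S C" "v \<in> S - C" "lt C T" for C
  proof -
    obtain P where P: "P \<in> Pred F lt T" "P = C \<or> lt C P" using Pred_above[OF C(1) T C(4)] .
    have "P \<in> F" using P(1) unfolding Pred_def by blast
    then have "lt S P \<and> v \<in> S - P"
      using P(2) C removed_stays_removed[OF S(1) C(1)] lt_trans[OF S(1) C(1)] by blast
    then have "covers F lt P v" unfolding covers_def using S(1) by blast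
    then show False using v(1) P(1) unfolding Vis_def by blast
  qed
  then have "is_witness F lt S v T"
    unfolding is_witness_def using T ST S v(2) by blast
  then show thesis using that S hat by blast
qed

lemma witness_pair_in_E_hat_x_diff:
  assumes T: "T \<in> F" "ex F lt T = Suc x"
    and S: "S \<in> F" "v \<in> hat F lt S" "is_witness F lt S v T"
  shows "S \<in> E F lt x" "v \<in> hat_x F lt x S - hat_x F lt (Suc x) S"
proof -
  have ST: "lt S T" and vS: "v \<in> S - T" using S(3) unfolding is_witness_def by auto
  have "card S < card T" using card_lt[OF S(1) T(1) ST] .
  then show SE: "S \<in> E F lt x"
    using T(2) card_sm_le[OF S(1)] S(1) unfolding E_def ex_def by auto
  have "T \<in> E F lt (Suc x)" using T unfolding E_def by auto
  then have "v \<notin> hat_x F lt (Suc x) S" unfolding hat_x_def using ST vS by blast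
  moreover have "False" if S': "S' \<in> E F lt x" "lt S S'" "v \<in> S - S'" for S'
  proof -
    have S'F: "S' \<in> F" using S'(1) unfolding E_def by blast
    obtain W where "is_witness F lt S v W" "W = S' \<or> lt W S'"
      using witness_below[OF S(1) S'F S'(2,3)] .
    moreover have "W = T" if "is_witness F lt S v W" for W
      using witness_unique[OF S(1) _ that S(3)] vS by blast
    ultimately have "card T \<le> card S'" using card_lt[OF T(1) S'F] by fastforce
    then show False using T(2) S'(1) unfolding E_def ex_def by auto
  qed
  then have "v \<in> hat_x F lt x S" unfolding hat_x_def using S(2) by blast
  ultimately show "v \<in> hat_x F lt x S - hat_x F lt (Suc x) S" by blast
qed

lemma card_hat_plus_Pred_le:
  assumes T: "T \<in> F" and S0: "S0 \<in> Pred F lt T"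
  shows "card (hat F lt T) + card S0 \<le> card T + card (Vis V F lt T - T)"
proof -
  let ?Vis = "Vis V F lt T"
  have "finite ?Vis" unfolding Vis_def using finite_V by simp
  have "hat F lt T \<inter> ?Vis = {}" unfolding hat_def Vis_def Pred_def by blast
  then have "card (hat F lt T) + card (?Vis \<inter> T) = card (hat F lt T \<union> (?Vis \<inter> T))"
    using finite_hat[OF T] \<open>finite ?Vis\<close> by (intro card_Un_disjoint[symmetric]) auto
  also have "\<dots> \<le> card T"
    using finite_member[OF T] by (intro card_mono) (auto simp: hat_def)
  finally have "card (hat F lt T) + card (?Vis \<inter> T) \<le> card T" .
  moreover have "card ?Vis = card (?Vis \<inter> T) + card (?Vis - T)"
    using \<open>finite ?Vis\<close> by (metis card_Int_Diff)
  moreover have "card S0 \<le> card ?Vis" using card_Pred_le_Vis[OF T S0] .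
  ultimately show ?thesis by linarith
qed

definition witness_pairs :: "'a set \<Rightarrow> ('a set \<times> 'a) set" where
  "witness_pairs T = {(S, v). S \<in> F \<and> v \<in> hat F lt S \<and> is_witness F lt S v T}"

lemma finite_witness_pairs: "finite (witness_pairs T)"
proof -
  have "witness_pairs T \<subseteq> F \<times> V"
    unfolding witness_pairs_def hat_def using subset_V by auto
  then show ?thesis using finite_F finite_V finite_subset by blast
qed

lemma witness_pairs_disjoint:
  assumes "T \<noteq> T'"
  shows "witness_pairs T \<inter> witness_pairs T' = {}"
  using witness_unique assms unfolding witness_pairs_def hat_def by blast

text \<open>If \<open>S0 \<in> Pred T\<close> contains the element of \<open>Vis T - T\<close> supplied by (DVS), the witness pair
  of that element has weight at least \<open>2 ^ (card T - card S0) > card T - card S0\<close>; this pays for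
  the excess of \<open>hat T\<close> over \<open>Vis T - T\<close> left by (LVS).\<close>

lemma card_hat_le_weighted_witness_pairs:
  assumes T: "T \<in> F" "ex F lt T = Suc x"
  shows "card (hat F lt T) \<le> (\<Sum>p\<in>witness_pairs T. 2 ^ (Suc x - ex F lt (fst p)))"
proof -
  define w where "w p = (2::nat) ^ (Suc x - ex F lt (fst p))" for p :: "'a set \<times> 'a"
  define R where "R = {p \<in> witness_pairs T. snd p \<in> Vis V F lt T - T}"
  have "T \<noteq> sm F lt" using T(2) unfolding ex_def by auto
  then obtain v0 where v0: "v0 \<in> Vis V F lt T" "v0 \<notin> T"
    using Vis_not_subset[OF T(1)] by blast
  then obtain S0 where S0: "S0 \<in> Pred F lt T" "v0 \<in> S0" unfolding Vis_def by blast
  then obtain S1 where S1: "S1 \<in> F" "S1 = S0 \<or> lt S1 S0" "(S1, v0) \<in> R"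
    using witness_of_visible[OF T(1) v0 S0] v0 unfolding R_def witness_pairs_def by auto
  have S0F: "S0 \<in> F" and "lt S0 T" using S0(1) unfolding Pred_def by auto
  then have "card S0 < card T" using card_lt T(1) by blast
  define k where "k = card T - card S0"
  have "card S1 \<le> card S0" using S1(1,2) card_lt[OF S1(1) S0F] by auto
  then have "k \<le> Suc x - ex F lt S1"
    using T(2) card_sm_le[OF S1(1)] unfolding k_def ex_def by linarith
  have "finite R" using finite_witness_pairs unfolding R_def by simp
  have "Vis V F lt T - T \<subseteq> snd ` R"
  proof
    fix v assume v: "v \<in> Vis V F lt T - T"
    then obtain S' where "S' \<in> Pred F lt T" "v \<in> S'" unfolding Vis_def by blast
    then obtain S where "S \<in> F" "v \<in> hat F lt S" "is_witness F lt S v T"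
      using witness_of_visible[OF T(1)] v by blast
    then show "v \<in> snd ` R" using v unfolding R_def witness_pairs_def by force
  qed
  then have card_Vis_le: "card (Vis V F lt T - T) \<le> card R"
    using \<open>finite R\<close> by (meson card_image_le card_mono finite_imageI le_trans)
  have "k < 2 ^ k" by (rule less_exp)
  also have "\<dots> \<le> w (S1, v0)"
    using \<open>k \<le> Suc x - ex F lt S1\<close> unfolding w_def by (simp add: power_increasing)
  finally have "k + card R \<le> sum w R"
    using \<open>finite R\<close> S1(3) by (intro card_plus_le_sum_weights) (auto simp: w_def)
  also have "\<dots> \<le> sum w (witness_pairs T)"
    using finite_witness_pairs by (intro sum_mono2) (auto simp: R_def)
  finally show ?thesis
    using card_hat_plus_Pred_le[OF T(1) S0(1)] card_Vis_le \<open>card S0 < card T\<close>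
    unfolding k_def w_def by linarith
qed

lemma sum_card_hat_new_le:
  "(\<Sum>T\<in>{T \<in> F. ex F lt T = Suc x}. card (hat F lt T))
     \<le> (\<Sum>S\<in>E F lt x. 2 ^ (Suc x - ex F lt S) * card (hat_x F lt x S - hat_x F lt (Suc x) S))"
proof -
  define N where "N = {T \<in> F. ex F lt T = Suc x}"
  define D where "D S = hat_x F lt x S - hat_x F lt (Suc x) S" for S
  define w where "w p = (2::nat) ^ (Suc x - ex F lt (fst p))" for p :: "'a set \<times> 'a"
  have finite_D: "finite (D S)" if "S \<in> E F lt x" for S
    using that finite_hat_x unfolding D_def E_def by simp
  have "(\<Sum>T\<in>N. card (hat F lt T)) \<le> (\<Sum>T\<in>N. sum w (witness_pairs T))"
    using card_hat_le_weighted_witness_pairs unfolding N_def w_def by (intro sum_mono) auto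
  also have "\<dots> = sum w (\<Union>(witness_pairs ` N))"
    using finite_F finite_witness_pairs witness_pairs_disjoint
    by (intro sum.UNION_disjoint[symmetric]) (auto simp: N_def)
  also have "\<dots> \<le> sum w (Sigma (E F lt x) D)"
  proof (rule sum_mono2)
    show "finite (Sigma (E F lt x) D)" using finite_E finite_D by blast
    show "\<Union>(witness_pairs ` N) \<subseteq> Sigma (E F lt x) D"
    proof
      fix p assume "p \<in> \<Union>(witness_pairs ` N)"
      then obtain T S v where "T \<in> N" "p = (S, v)" "S \<in> F" "v \<in> hat F lt S" "is_witness F lt S v T"
        unfolding witness_pairs_def by blast
      then show "p \<in> Sigma (E F lt x) D"
        using witness_pair_in_E_hat_x_diff[of T x S v] unfolding N_def D_def by auto
    qed
  qed simp
  also have "\<dots> = (\<Sum>S\<in>E F lt x. \<Sum>v\<in>D S. w (S, v))"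
    using sum.Sigma[of "E F lt x" D "\<lambda>S v. w (S, v)"] finite_E finite_D by (simp add: case_prod_eta)
  also have "\<dots> = (\<Sum>S\<in>E F lt x. 2 ^ (Suc x - ex F lt S) * card (D S))"
    by (simp add: w_def mult.commute)
  finally show ?thesis unfolding N_def D_def .
qed

lemma M_Suc_le: "M F lt (Suc x) \<le> 2 * M F lt x"
proof -
  define w where "w S = (2::nat) ^ (Suc x - ex F lt S)" for S
  define N where "N = {T \<in> F. ex F lt T = Suc x}"
  have "E F lt (Suc x) = E F lt x \<union> N" "E F lt x \<inter> N = {}"
    unfolding E_def N_def by auto
  then have "M F lt (Suc x) = (\<Sum>S\<in>E F lt x. w S * card (hat_x F lt (Suc x) S))
                            + (\<Sum>T\<in>N. card (hat_x F lt (Suc x) T))"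
    using finite_E finite_F unfolding M_def w_def N_def by (simp add: sum.union_disjoint)
  also have "(\<Sum>T\<in>N. card (hat_x F lt (Suc x) T)) \<le> (\<Sum>T\<in>N. card (hat F lt T))"
    using finite_hat hat_x_subset_hat unfolding N_def by (intro sum_mono card_mono) auto
  also have "\<dots> \<le> (\<Sum>S\<in>E F lt x. w S * card (hat_x F lt x S - hat_x F lt (Suc x) S))"
    using sum_card_hat_new_le unfolding N_def w_def .
  also have "(\<Sum>S\<in>E F lt x. w S * card (hat_x F lt (Suc x) S))
             + (\<Sum>S\<in>E F lt x. w S * card (hat_x F lt x S - hat_x F lt (Suc x) S))
           = (\<Sum>S\<in>E F lt x. w S * card (hat_x F lt x S))"
  proof -
    have "card (hat_x F lt (Suc x) S) + card (hat_x F lt x S - hat_x F lt (Suc x) S)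
          = card (hat_x F lt x S)" if "S \<in> E F lt x" for S
    proof -
      have fin: "finite (hat_x F lt x S)" using that finite_hat_x unfolding E_def by simp
      show ?thesis
        using card_Diff_subset[OF finite_subset[OF hat_x_Suc_subset fin] hat_x_Suc_subset]
          card_mono[OF fin hat_x_Suc_subset] by linarith
    qed
    then show ?thesis by (simp add: sum.distrib[symmetric] distrib_left[symmetric])
  qed
  also have "\<dots> = 2 * M F lt x"
    unfolding M_def sum_distrib_left w_def E_def
    by (intro sum.cong) (auto simp: Suc_diff_le)
  finally show ?thesis by simp
qed

lemma M_le: "M F lt x \<le> 2 ^ x * card (sm F lt)"
proof (induction x)
  case 0
  then show ?case using M_0 by simp
next
  case (Suc x)
  then show ?case using M_Suc_le[of x] by simp
qed

end

theorem theorem2: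
  fixes V :: "'a set" and F :: "'a set set" and lt :: "'a set \<Rightarrow> 'a set \<Rightarrow> bool" and x :: nat
  assumes "IS_family V F lt"
  shows "M F lt x \<le> 2 ^ x * card (sm F lt)"
  using M_le[OF assms] .

end
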